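(* Let $f: \{0, 1\}^n \to \{0, 1\}$ be a Boolean function with M\"obius support $\mathcal{S}_f$. For any two distinct sets $S,T \in \mathcal{S}_f$ there exists a set $p(\{S, T\}) \subseteq \mathcal{S}_f$ such that (i) $p(\{S, T\}) \neq \{S,T\}$; (ii) $|p(\{S, T\})| = 2$ if $S \cup T \notin \mathcal{S}_f$ and $|p(\{S, T\})| = 1$ if $S \cup T \in \mathcal{S}_f$; and (iii) $\bigcup_{U \in p(\{S, T\})} U= S \cup T$.
   Context: Every $f:\{0,1\}^n\to\{0,1\}$ has a unique M\"obius expansion $f=\sum_{S\subseteq[n]}\widetilde f(S)\mathsf{AND}_S$ with real coefficients, where $\mathsf{AND}_S(x)=\prod_{i\in S}x_i$; its M\"obius support is $\mathcal{S}_f=\{S\subseteq[n]:\widetilde f(S)\ne0\}$. *)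

theory Defs
  imports Complex_Main "HOL-Library.FuncSet"
begin

text \<open>Points of the cube {0,1}^n are represented by the set of coordinates equal to 1,
  a subset of {..<n}.\<close>

definition AND_fn :: "nat set \<Rightarrow> nat set \<Rightarrow> real" where
  "AND_fn S x = (if S \<subseteq> x then 1 else 0)"

definition bool_val :: "bool \<Rightarrow> real" where
  "bool_val b = (if b then 1 else 0)"

definition mobius_coeffs :: "nat \<Rightarrow> (nat set \<Rightarrow> bool) \<Rightarrow> (nat set \<Rightarrow> real)" where
  "mobius_coeffs n f = (THE c. c \<in> extensional (Pow {..<n}) \<and>
      (\<forall>x \<in> Pow {..<n}. bool_val (f x) = (\<Sum>S \<in> Pow {..<n}. c S * AND_fn S x)))"

definition mobius_support :: "nat \<Rightarrow> (nat set \<Rightarrow> bool) \<Rightarrow> nat set set" where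
  "mobius_support n f = {S. S \<subseteq> {..<n} \<and> mobius_coeffs n f S \<noteq> 0}"

end

theory Submission
  imports Defs
begin

text \<open>Since f is Boolean, f * f = f. Multiplying two Moebius expansions and using
  AND_U * AND_V = AND_(U \<union> V), uniqueness of the expansion gives
  c(W) = \<Sum> c(U) c(V) over all ordered pairs (U, V) with U \<union> V = W.
  If W = S \<union> T is outside the support, c(W) = 0, while the pairs (S, T) and (T, S)
  contribute 2 c(S) c(T) \<noteq> 0; so some other pair (U, V) with U \<union> V = W has
  c(U) c(V) \<noteq> 0, and U \<noteq> V because c(W) = 0.\<close>

lemma sum_Pow_AND_fn:
  assumes "finite A" "x \<subseteq> A"
  shows "(\<Sum>S\<in>Pow A. c S * AND_fn S x) = (\<Sum>S\<in>Pow x. c S)"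
  by (rule sum.mono_neutral_cong_right) (use assms in \<open>auto simp: AND_fn_def\<close>)

lemma AND_fn_mult: "AND_fn U x * AND_fn V x = AND_fn (U \<union> V) x"
  by (simp add: AND_fn_def)

lemma mobius_expansion_unique:
  assumes "finite A"
    and "\<forall>x\<in>Pow A. (\<Sum>S\<in>Pow A. c S * AND_fn S x) = (\<Sum>S\<in>Pow A. d S * AND_fn S x)"
    and "W \<subseteq> A"
  shows "c W = (d W :: real)"
  using finite_subset[OF \<open>W \<subseteq> A\<close> \<open>finite A\<close>] \<open>W \<subseteq> A\<close>
proof (induction W rule: finite_psubset_induct)
  case (psubset W)
  have smaller: "(\<Sum>V\<in>Pow W - {W}. c V) = (\<Sum>V\<in>Pow W - {W}. d V)"
    using psubset by (intro sum.cong) auto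
  have "c W + (\<Sum>V\<in>Pow W - {W}. c V) = (\<Sum>V\<in>Pow W. c V)"
    using psubset.hyps by (simp add: sum.remove[of "Pow W" W])
  also have "\<dots> = (\<Sum>V\<in>Pow W. d V)"
    using assms(2) psubset.prems by (simp add: sum_Pow_AND_fn[OF assms(1)])
  also have "\<dots> = d W + (\<Sum>V\<in>Pow W - {W}. d V)"
    using psubset.hyps by (simp add: sum.remove[of "Pow W" W])
  finally show ?case
    using smaller by simp
qed

lemma mobius_expansion_exists:
  fixes h :: "nat set \<Rightarrow> real"
  assumes "finite A"
  shows "\<exists>c. c \<in> extensional (Pow A) \<and> (\<forall>x\<in>Pow A. h x = (\<Sum>S\<in>Pow A. c S * AND_fn S x))"
proof -
  define g where "g S = (\<Sum>T\<in>Pow S. (-1) ^ card T * h T)" for S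
  define c where "c = restrict (\<lambda>S. (-1) ^ card S * g S) (Pow A)"
  have "h x = (\<Sum>S\<in>Pow A. c S * AND_fn S x)" if x: "x \<in> Pow A" for x
  proof -
    have "h x = (\<Sum>T\<in>Pow x. (-1) ^ card T * g T)"
      by (rule inclusion_exclusion_symmetric) (use x assms in \<open>auto simp: g_def finite_subset\<close>)
    also have "\<dots> = (\<Sum>T\<in>Pow x. c T)"
      using x by (intro sum.cong) (auto simp: c_def)
    finally show ?thesis
      using sum_Pow_AND_fn[OF assms] x by auto
  qed
  then show ?thesis
    by (intro exI[of _ c]) (simp add: c_def)
qed

lemma mobius_coeffs_expansion:
  "mobius_coeffs n f \<in> extensional (Pow {..<n})"
  "\<forall>x\<in>Pow {..<n}. bool_val (f x) = (\<Sum>S\<in>Pow {..<n}. mobius_coeffs n f S * AND_fn S x)"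
proof -
  let ?P = "\<lambda>c. c \<in> extensional (Pow {..<n}) \<and>
      (\<forall>x\<in>Pow {..<n}. bool_val (f x) = (\<Sum>S\<in>Pow {..<n}. c S * AND_fn S x))"
  have "\<exists>!c. ?P c"
  proof (rule ex_ex1I)
    show "\<exists>c. ?P c"
      by (rule mobius_expansion_exists) simp
    show "c = d" if c: "?P c" and d: "?P d" for c d
    proof (rule extensionalityI[of _ "Pow {..<n}"])
      show "c \<in> extensional (Pow {..<n})" "d \<in> extensional (Pow {..<n})"
        using c d by blast+
      show "c W = d W" if "W \<in> Pow {..<n}" for W
        using c d that
        by (intro mobius_expansion_unique[OF finite_lessThan, where c = c and d = d]) auto
    qed
  qed
  then have "?P (mobius_coeffs n f)"
    unfolding mobius_coeffs_def by (rule theI')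
  then show "mobius_coeffs n f \<in> extensional (Pow {..<n})"
    "\<forall>x\<in>Pow {..<n}. bool_val (f x) = (\<Sum>S\<in>Pow {..<n}. mobius_coeffs n f S * AND_fn S x)"
    by auto
qed

lemma mobius_expansion_mult:
  fixes c d :: "nat set \<Rightarrow> real"
  assumes "finite A"
  shows "(\<Sum>U\<in>Pow A. c U * AND_fn U x) * (\<Sum>V\<in>Pow A. d V * AND_fn V x) =
    (\<Sum>W\<in>Pow A. (\<Sum>(U, V)\<in>{(U, V). U \<union> V = W}. c U * d V) * AND_fn W x)"
proof -
  let ?g = "\<lambda>p. c (fst p) * d (snd p) * AND_fn (fst p \<union> snd p) x"
  have fibre: "(\<Sum>p\<in>{p \<in> Pow A \<times> Pow A. fst p \<union> snd p = W}. ?g p) =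
      (\<Sum>(U, V)\<in>{(U, V). U \<union> V = W}. c U * d V) * AND_fn W x"
    if "W \<in> Pow A" for W
  proof -
    have "{p \<in> Pow A \<times> Pow A. fst p \<union> snd p = W} = {(U, V). U \<union> V = W}"
      using that by auto
    then show ?thesis
      unfolding sum_distrib_right by (intro sum.cong) auto
  qed
  have "(\<Sum>U\<in>Pow A. c U * AND_fn U x) * (\<Sum>V\<in>Pow A. d V * AND_fn V x) =
      (\<Sum>p\<in>Pow A \<times> Pow A. ?g p)"
    by (simp add: sum_product sum.cartesian_product' flip: AND_fn_mult) (simp add: mult_ac)
  also have "\<dots> = (\<Sum>W\<in>Pow A. \<Sum>p\<in>{p \<in> Pow A \<times> Pow A. fst p \<union> snd p = W}. ?g p)"
    using assms by (intro sum.group[where g = "\<lambda>p. fst p \<union> snd p", symmetric]) auto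
  also have "\<dots> = (\<Sum>W\<in>Pow A. (\<Sum>(U, V)\<in>{(U, V). U \<union> V = W}. c U * d V) * AND_fn W x)"
    using fibre by (intro sum.cong) auto
  finally show ?thesis .
qed

lemma mobius_coeffs_union_convolution:
  assumes "W \<subseteq> {..<n}"
  shows "mobius_coeffs n f W =
    (\<Sum>(U, V)\<in>{(U, V). U \<union> V = W}. mobius_coeffs n f U * mobius_coeffs n f V)"
proof -
  let ?c = "mobius_coeffs n f"
  have "(\<Sum>S\<in>Pow {..<n}. ?c S * AND_fn S x) =
      (\<Sum>S\<in>Pow {..<n}. (\<Sum>(U, V)\<in>{(U, V). U \<union> V = S}. ?c U * ?c V) * AND_fn S x)"
    if "x \<in> Pow {..<n}" for x
  proof -
    have expansion: "bool_val (f x) = (\<Sum>S\<in>Pow {..<n}. ?c S * AND_fn S x)"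
      using that mobius_coeffs_expansion(2) by blast
    have "(\<Sum>S\<in>Pow {..<n}. ?c S * AND_fn S x) = bool_val (f x) * bool_val (f x)"
      unfolding expansion[symmetric] by (simp add: bool_val_def)
    also have "\<dots> = (\<Sum>U\<in>Pow {..<n}. ?c U * AND_fn U x) * (\<Sum>V\<in>Pow {..<n}. ?c V * AND_fn V x)"
      by (simp only: expansion)
    finally show ?thesis
      by (simp only: mobius_expansion_mult[OF finite_lessThan])
  qed
  then show ?thesis
    by (intro mobius_expansion_unique[OF finite_lessThan _ assms, where c = ?c]) blast
qed

lemma finite_union_pairs:
  assumes "finite W"
  shows "finite {(U, V). U \<union> V = W}"
  by (rule finite_subset[of _ "Pow W \<times> Pow W"]) (use assms in blast)+

lemma union_convolution_other_pair:
  fixes c :: "'a set \<Rightarrow> real"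
  assumes "finite (S \<union> T)" and "S \<noteq> T" and "c S \<noteq> 0" and "c T \<noteq> 0"
    and "c (S \<union> T) = 0"
    and "c (S \<union> T) = (\<Sum>(U, V)\<in>{(U, V). U \<union> V = S \<union> T}. c U * c V)"
  obtains U V where "c U \<noteq> 0" "c V \<noteq> 0" "U \<noteq> V" "U \<union> V = S \<union> T" "{U, V} \<noteq> {S, T}"
proof -
  let ?P = "{(U, V). U \<union> V = S \<union> T}"
  let ?g = "\<lambda>(U, V). c U * c V"
  have "0 = (\<Sum>p\<in>?P. ?g p)"
    using assms(5,6) by simp
  also have "\<dots> = (\<Sum>p\<in>?P - {(S, T), (T, S)}. ?g p) + (\<Sum>p\<in>{(S, T), (T, S)}. ?g p)"
    by (rule sum.subset_diff) (blast, rule finite_union_pairs[OF assms(1)])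
  also have "(\<Sum>p\<in>{(S, T), (T, S)}. ?g p) = 2 * (c S * c T)"
    using assms(2) by simp
  finally have "(\<Sum>p\<in>?P - {(S, T), (T, S)}. ?g p) = - 2 * (c S * c T)"
    by linarith
  then have "(\<Sum>p\<in>?P - {(S, T), (T, S)}. ?g p) \<noteq> 0"
    using assms(3,4) by simp
  then obtain p where "p \<in> ?P - {(S, T), (T, S)}" "?g p \<noteq> 0"
    by (rule sum.not_neutral_contains_not_neutral)
  then obtain U V where UV: "U \<union> V = S \<union> T" "(U, V) \<notin> {(S, T), (T, S)}"
    "c U \<noteq> 0" "c V \<noteq> 0"
    by (cases p) auto
  moreover have "U \<noteq> V"
    using UV(1,3) assms(5) by (metis sup.idem)
  moreover have "{U, V} \<noteq> {S, T}"
    using UV(2) by (simp add: doubleton_eq_iff)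
  ultimately show ?thesis
    by (intro that)
qed

theorem claim4p5:
  fixes n :: nat and f :: "nat set \<Rightarrow> bool" and S T :: "nat set"
  assumes "S \<in> mobius_support n f" and "T \<in> mobius_support n f" and "S \<noteq> T"
  shows "\<exists>P. P \<subseteq> mobius_support n f \<and> P \<noteq> {S, T}
           \<and> (S \<union> T \<notin> mobius_support n f \<longrightarrow> card P = 2)
           \<and> (S \<union> T \<in> mobius_support n f \<longrightarrow> card P = 1)
           \<and> \<Union> P = S \<union> T"
proof (cases "S \<union> T \<in> mobius_support n f")
  case True
  have "{S \<union> T} \<noteq> {S, T}"
    using assms(3) by (metis insertI1 insert_commute singletonD)
  with True show ?thesis
    by (intro exI[of _ "{S \<union> T}"]) simp
next
  case False
  let ?c = "mobius_coeffs n f"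
  have ST: "S \<union> T \<subseteq> {..<n}" "?c S \<noteq> 0" "?c T \<noteq> 0"
    using assms(1,2) by (auto simp: mobius_support_def)
  have finite: "finite (S \<union> T)"
    using ST(1) finite_subset by blast
  have zero: "?c (S \<union> T) = 0"
    using False ST(1) by (simp add: mobius_support_def)
  obtain U V where UV: "?c U \<noteq> 0" "?c V \<noteq> 0" "U \<noteq> V" "U \<union> V = S \<union> T" "{U, V} \<noteq> {S, T}"
    by (rule union_convolution_other_pair[OF finite assms(3) ST(2,3) zero
          mobius_coeffs_union_convolution[OF ST(1)]])
  have "{U, V} \<subseteq> mobius_support n f"
    using UV ST(1) by (auto simp: mobius_support_def)
  with UV False show ?thesis
    by (intro exI[of _ "{U, V}"]) simp
qed

end
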